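(* Let $\mathcal{T}$ be a tangle of order $k$ in a connectivity system $(E,\lambda)$. Let $X$ be a $\mathcal{T}$-strong $k$-separating set, and let $(X_i)_{i=1}^m$ be a partial $k$-sequence for $X$. Then $\mathrm{fcl}_{\mathcal{T}}(X)=X\cup \bigcup_{i=1}^m X_i$ if and only if $(X_i)_{i=1}^m$ is maximal.
   Context: A connectivity system is a pair $(E,\lambda)$ with $E$ finite and $\lambda$ an integer-valued symmetric submodular function on subsets of $E$. $X$ is $k$-separating if $\lambda(X)\le k$. A tangle of order $k$ is a collection $\mathcal T$ of subsets of $E$ with (T1) $\lambda(A)<k$ for $A\in\mathcal T$; (T2) if $\lambda(A)\le k-1$ then $A\in\mathcal T$ or $E-A\in\mathcal T$; (T3) $A\cup B\cup C\ne E$ for $A,B,C\in\mathcal T$; (T4) $E-\{e\}\notin\mathcal T$ for $e\in E$. A set is $\mathcal T$-weak if contained in a member of $\mathcal T$, and $\mathcal T$-strong otherwise. A $\mathcal T$-strong $k$-separating set $X$ is fully closed if $X\cup Y$ is not $k$-separating for every nonempty $\mathcal T$-weak $Y\subseteq E-X$; $\mathrm{fcl}_{\mathcal T}(X)$ is the intersection of all fully closed $k$-separating sets containing $X$. A partial $k$-sequence for $X$ is a sequence $(X_i)_{i=1}^m$ of pairwise disjoint nonempty $\mathcal T$-weak subsets of $E-X$ such that $X\cup\bigcup_{i=1}^jX_i$ is $k$-separating for all $j\le m$. It is maximal if $X\cup\bigcup_{i=1}^m X_i$ is maximal under inclusion among all sets of the form $X\cup\bigcup_{i=1}^{n}Y_i$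 with $(Y_i)_{i=1}^n$ a partial $k$-sequence for $X$. *)

theory Defs
  imports Main
begin

definition connectivity_system :: "'a set \<Rightarrow> ('a set \<Rightarrow> int) \<Rightarrow> bool" where
  "connectivity_system E lam \<longleftrightarrow> finite E
     \<and> (\<forall>X. X \<subseteq> E \<longrightarrow> lam X = lam (E - X))
     \<and> (\<forall>X Y. X \<subseteq> E \<longrightarrow> Y \<subseteq> E \<longrightarrow> lam (X \<union> Y) + lam (X \<inter> Y) \<le> lam X + lam Y)"

definition k_separating :: "('a set \<Rightarrow> int) \<Rightarrow> int \<Rightarrow> 'a set \<Rightarrow> bool" where
  "k_separating lam k X \<longleftrightarrow> lam X \<le> k"

definition tangle :: "'a set \<Rightarrow> ('a set \<Rightarrow> int) \<Rightarrow> int \<Rightarrow> 'a set set \<Rightarrow> bool" where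
  "tangle E lam k T \<longleftrightarrow>
     (\<forall>A\<in>T. A \<subseteq> E)
   \<and> (\<forall>A\<in>T. lam A < k)
   \<and> (\<forall>A. A \<subseteq> E \<longrightarrow> lam A \<le> k - 1 \<longrightarrow> A \<in> T \<or> E - A \<in> T)
   \<and> (\<forall>A\<in>T. \<forall>B\<in>T. \<forall>C\<in>T. A \<union> B \<union> C \<noteq> E)
   \<and> (\<forall>e\<in>E. E - {e} \<notin> T)"

definition weak :: "'a set set \<Rightarrow> 'a set \<Rightarrow> bool" where
  "weak T Y \<longleftrightarrow> (\<exists>A\<in>T. Y \<subseteq> A)"

definition strong :: "'a set set \<Rightarrow> 'a set \<Rightarrow> bool" where
  "strong T Y \<longleftrightarrow> \<not> weak T Y"

definition fully_closed :: "'a set \<Rightarrow> ('a set \<Rightarrow> int) \<Rightarrow> int \<Rightarrow> 'a set set \<Rightarrow> 'a set \<Rightarrow> bool" where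
  "fully_closed E lam k T X \<longleftrightarrow> X \<subseteq> E \<and> strong T X \<and> k_separating lam k X
     \<and> (\<forall>Y. Y \<subseteq> E - X \<longrightarrow> Y \<noteq> {} \<longrightarrow> weak T Y \<longrightarrow> \<not> k_separating lam k (X \<union> Y))"

text \<open>Intersection taken inside the ground set E (empty intersection = E).\<close>
definition fcl :: "'a set \<Rightarrow> ('a set \<Rightarrow> int) \<Rightarrow> int \<Rightarrow> 'a set set \<Rightarrow> 'a set \<Rightarrow> 'a set" where
  "fcl E lam k T X = E \<inter> \<Inter> {Z. fully_closed E lam k T Z \<and> X \<subseteq> Z}"

definition partial_k_sequence ::
  "'a set \<Rightarrow> ('a set \<Rightarrow> int) \<Rightarrow> int \<Rightarrow> 'a set set \<Rightarrow> 'a set \<Rightarrow> 'a set list \<Rightarrow> bool" where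
  "partial_k_sequence E lam k T X Xs \<longleftrightarrow>
     (\<forall>i<length Xs. \<forall>j<length Xs. i \<noteq> j \<longrightarrow> Xs ! i \<inter> Xs ! j = {})
   \<and> (\<forall>i<length Xs. Xs ! i \<noteq> {} \<and> weak T (Xs ! i) \<and> Xs ! i \<subseteq> E - X)
   \<and> (\<forall>j. 1 \<le> j \<longrightarrow> j \<le> length Xs \<longrightarrow> k_separating lam k (X \<union> \<Union> (set (take j Xs))))"

definition maximal_partial_k_sequence ::
  "'a set \<Rightarrow> ('a set \<Rightarrow> int) \<Rightarrow> int \<Rightarrow> 'a set set \<Rightarrow> 'a set \<Rightarrow> 'a set list \<Rightarrow> bool" where
  "maximal_partial_k_sequence E lam k T X Xs \<longleftrightarrow>
     partial_k_sequence E lam k T X Xs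
   \<and> (\<forall>Ys. partial_k_sequence E lam k T X Ys \<longrightarrow>
          X \<union> \<Union> (set Xs) \<subseteq> X \<union> \<Union> (set Ys) \<longrightarrow> X \<union> \<Union> (set Ys) = X \<union> \<Union> (set Xs))"

end

theory Submission
  imports Defs
begin

text \<open>Every partial k-sequence for X stays inside every fully closed set containing X: by
  submodularity, Z \<inter> (S \<union> Y) is T-strong and hence has connectivity at least k, which forces
  Z \<union> Y to be k-separating, so full closure of Z absorbs the weak set Y - Z. Thus
  X \<union> \<Union>Xs \<subseteq> fcl(X) always. Conversely, if the sequence is maximal then X \<union> \<Union>Xs is fully
  closed, since a weak set Y violating full closure could be appended to the sequence;
  so it contains fcl(X). If instead X \<union> \<Union>Xs = fcl(X), any longer sequence is bounded by
  fcl(X) as well, which is maximality.\<close>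

lemma connectivity_system_complement:
  "connectivity_system E lam \<Longrightarrow> A \<subseteq> E \<Longrightarrow> lam (E - A) = lam A"
  unfolding connectivity_system_def by (metis (no_types))

lemma connectivity_system_submodular:
  "connectivity_system E lam \<Longrightarrow> A \<subseteq> E \<Longrightarrow> B \<subseteq> E
    \<Longrightarrow> lam (A \<union> B) + lam (A \<inter> B) \<le> lam A + lam B"
  unfolding connectivity_system_def by (metis (no_types))

lemma connectivity_system_ground_le:
  assumes cs: "connectivity_system E lam" and AE: "A \<subseteq> E"
  shows "lam E \<le> lam A"
proof -
  have "lam (A \<union> (E - A)) + lam (A \<inter> (E - A)) \<le> lam A + lam (E - A)"
    using connectivity_system_submodular[OF cs AE, of "E - A"] by blast
  moreover have "A \<union> (E - A) = E" "A \<inter> (E - A) = {}" using AE by auto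
  moreover have "lam (E - A) = lam A" "lam {} = lam E"
    using connectivity_system_complement[OF cs] AE by (metis Diff_cancel order_refl)+
  ultimately show ?thesis by simp
qed

lemma weak_subset: "weak T Y \<Longrightarrow> W \<subseteq> Y \<Longrightarrow> weak T W"
  unfolding weak_def by blast

lemma strong_superset: "strong T X \<Longrightarrow> X \<subseteq> Z \<Longrightarrow> strong T Z"
  unfolding strong_def weak_def by blast

lemma fully_closed_subset: "fully_closed E lam k T Z \<Longrightarrow> Z \<subseteq> E"
  unfolding fully_closed_def by (elim conjE)

lemma fully_closed_k_separating: "fully_closed E lam k T Z \<Longrightarrow> k_separating lam k Z"
  unfolding fully_closed_def by (elim conjE)

lemma fully_closed_weak_extension_empty:
  assumes "fully_closed E lam k T Z" "Y \<subseteq> E - Z" "weak T Y" "k_separating lam k (Z \<union> Y)"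
  shows "Y = {}"
  using assms unfolding fully_closed_def by (elim conjE allE[of _ Y]) (auto simp only:)

lemma fully_closed_strong_subset_lam_ge:
  assumes cs: "connectivity_system E lam" and tg: "tangle E lam k T"
    and fc: "fully_closed E lam k T Z" and "Z \<noteq> E" and "A \<subseteq> Z" and "strong T A"
  shows "k \<le> lam A"
proof (rule ccontr)
  assume "\<not> k \<le> lam A"
  then have lA: "lam A \<le> k - 1" by simp
  have ZE: "Z \<subseteq> E" by (rule fully_closed_subset[OF fc])
  with \<open>A \<subseteq> Z\<close> have AE: "A \<subseteq> E" by blast
  have "A \<notin> T" using \<open>strong T A\<close> unfolding strong_def weak_def by blast
  then have "E - A \<in> T" using tg lA AE unfolding tangle_def by blast
  then have "weak T (E - Z)" using \<open>A \<subseteq> Z\<close> unfolding weak_def by blast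
  moreover have "k_separating lam k (Z \<union> (E - Z))"
    using connectivity_system_ground_le[OF cs AE] lA ZE
    unfolding k_separating_def by (simp add: Un_absorb1)
  ultimately have "E - Z = {}" using fully_closed_weak_extension_empty[OF fc] by blast
  with ZE \<open>Z \<noteq> E\<close> show False by blast
qed

lemma fully_closed_absorbs_weak:
  assumes cs: "connectivity_system E lam" and tg: "tangle E lam k T"
    and fc: "fully_closed E lam k T Z" and SZ: "S \<subseteq> Z" and sS: "strong T S"
    and wY: "weak T Y" and YE: "Y \<subseteq> E" and kSY: "k_separating lam k (S \<union> Y)"
  shows "S \<union> Y \<subseteq> Z"
proof (cases "Z = E")
  case True
  with SZ YE show ?thesis by simp
next
  case False
  have ZE: "Z \<subseteq> E" and kZ: "lam Z \<le> k"
    using fully_closed_subset[OF fc] fully_closed_k_separating[OF fc]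
    unfolding k_separating_def by blast+
  have "S \<subseteq> Z \<inter> (S \<union> Y)" using SZ by blast
  then have "strong T (Z \<inter> (S \<union> Y))" by (rule strong_superset[OF sS])
  then have "k \<le> lam (Z \<inter> (S \<union> Y))"
    using fully_closed_strong_subset_lam_ge[OF cs tg fc False] by blast
  moreover have "lam (Z \<union> (S \<union> Y)) + lam (Z \<inter> (S \<union> Y)) \<le> lam Z + lam (S \<union> Y)"
    using connectivity_system_submodular[OF cs ZE, of "S \<union> Y"] SZ ZE YE by blast
  ultimately have "lam (Z \<union> (S \<union> Y)) \<le> k" using kZ kSY unfolding k_separating_def by linarith
  moreover have "Z \<union> (S \<union> Y) = Z \<union> (Y - Z)" using SZ by blast
  ultimately have "k_separating lam k (Z \<union> (Y - Z))" unfolding k_separating_def by simp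
  moreover have "weak T (Y - Z)" using weak_subset[OF wY] by blast
  moreover have "Y - Z \<subseteq> E - Z" using YE by blast
  ultimately have "Y - Z = {}" using fully_closed_weak_extension_empty[OF fc] by blast
  then show ?thesis using SZ by blast
qed

lemma partial_k_sequence_subset_fully_closed:
  assumes cs: "connectivity_system E lam" and tg: "tangle E lam k T"
    and fc: "fully_closed E lam k T Z" and "X \<subseteq> Z" and sX: "strong T X"
    and ps: "partial_k_sequence E lam k T X Xs"
  shows "X \<union> \<Union> (set Xs) \<subseteq> Z"
proof -
  have "X \<union> \<Union> (set (take j Xs)) \<subseteq> Z" if "j \<le> length Xs" for j
    using that
  proof (induction j)
    case 0
    then show ?case using \<open>X \<subseteq> Z\<close> by simp
  next
    case (Suc j)
    then have j: "j < length Xs" by simp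
    define S where "S = X \<union> \<Union> (set (take j Xs))"
    have step: "X \<union> \<Union> (set (take (Suc j) Xs)) = S \<union> Xs ! j"
      using j unfolding S_def by (auto simp: take_Suc_conv_app_nth)
    have "weak T (Xs ! j)" "Xs ! j \<subseteq> E"
      using ps j unfolding partial_k_sequence_def by blast+
    moreover have "k_separating lam k (S \<union> Xs ! j)"
      using ps Suc.prems step unfolding partial_k_sequence_def by (metis le_add1 plus_1_eq_Suc)
    moreover have "S \<subseteq> Z" using Suc j unfolding S_def by simp
    moreover have "strong T S" by (rule strong_superset[OF sX]) (simp add: S_def)
    ultimately show ?case
      using fully_closed_absorbs_weak[OF cs tg fc] step by metis
  qed
  then show ?thesis by (metis order_refl take_all)
qed

lemma partial_k_sequence_subset_ground:
  "partial_k_sequence E lam k T X Xs \<Longrightarrow> \<Union> (set Xs) \<subseteq> E"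
  unfolding partial_k_sequence_def set_conv_nth by blast

lemma partial_k_sequence_subset_fcl:
  assumes "connectivity_system E lam" "tangle E lam k T" "X \<subseteq> E" "strong T X"
    and ps: "partial_k_sequence E lam k T X Xs"
  shows "X \<union> \<Union> (set Xs) \<subseteq> fcl E lam k T X"
  using partial_k_sequence_subset_fully_closed[OF assms(1,2) _ _ assms(4) ps]
    partial_k_sequence_subset_ground[OF ps] assms(3)
  unfolding fcl_def by blast

lemma partial_k_sequence_k_separating:
  assumes "k_separating lam k X" "partial_k_sequence E lam k T X Xs"
  shows "k_separating lam k (X \<union> \<Union> (set Xs))"
proof (cases "Xs = []")
  case False
  then have "1 \<le> length Xs" by (simp add: Suc_leI)
  then show ?thesis using assms(2) unfolding partial_k_sequence_def by (metis order_refl take_all)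
qed (use assms(1) in simp)

lemma partial_k_sequence_snoc:
  assumes ps: "partial_k_sequence E lam k T X Xs"
    and "Y \<noteq> {}" "weak T Y" "Y \<subseteq> E - (X \<union> \<Union> (set Xs))"
    and kY: "k_separating lam k (X \<union> \<Union> (set Xs) \<union> Y)"
  shows "partial_k_sequence E lam k T X (Xs @ [Y])"
proof -
  have disj: "x \<notin> Y" if "i < length Xs" "x \<in> Xs ! i" for i x
    using that nth_mem \<open>Y \<subseteq> E - (X \<union> \<Union> (set Xs))\<close> by blast
  show ?thesis
    unfolding partial_k_sequence_def
  proof (intro conjI allI impI)
    fix i j assume "i < length (Xs @ [Y])" "j < length (Xs @ [Y])" "i \<noteq> j"
    then consider "i < length Xs" "j < length Xs" | "i < length Xs" "j = length Xs"
      | "i = length Xs" "j < length Xs"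
      by fastforce
    then show "(Xs @ [Y]) ! i \<inter> (Xs @ [Y]) ! j = {}"
    proof cases
      case 1
      then show ?thesis using ps \<open>i \<noteq> j\<close> unfolding partial_k_sequence_def by (simp add: nth_append)
    qed (use disj in \<open>auto simp: nth_append\<close>)
  next
    fix i assume "i < length (Xs @ [Y])"
    then show "(Xs @ [Y]) ! i \<noteq> {}" "weak T ((Xs @ [Y]) ! i)" "(Xs @ [Y]) ! i \<subseteq> E - X"
      using ps assms(2-4) unfolding partial_k_sequence_def
      by (auto simp: nth_append less_Suc_eq)
  next
    fix j assume "1 \<le> j" "j \<le> length (Xs @ [Y])"
    then consider "j \<le> length Xs" | "j = Suc (length Xs)" by fastforce
    then show "k_separating lam k (X \<union> \<Union> (set (take j (Xs @ [Y]))))"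
    proof cases
      case 1
      then show ?thesis using ps \<open>1 \<le> j\<close> unfolding partial_k_sequence_def by simp
    next
      case 2
      then show ?thesis using kY by (simp add: Un_ac)
    qed
  qed
qed

lemma maximal_partial_k_sequence_fully_closed:
  assumes XE: "X \<subseteq> E" and sX: "strong T X" and kX: "k_separating lam k X"
    and m: "maximal_partial_k_sequence E lam k T X Xs"
  shows "fully_closed E lam k T (X \<union> \<Union> (set Xs))"
proof -
  have ps: "partial_k_sequence E lam k T X Xs"
    using m unfolding maximal_partial_k_sequence_def by blast
  have "\<not> k_separating lam k (X \<union> \<Union> (set Xs) \<union> Y)"
    if Y: "Y \<subseteq> E - (X \<union> \<Union> (set Xs))" "Y \<noteq> {}" "weak T Y" for Y
  proof
    assume "k_separating lam k (X \<union> \<Union> (set Xs) \<union> Y)"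
    with ps Y have "partial_k_sequence E lam k T X (Xs @ [Y])"
      using partial_k_sequence_snoc by blast
    moreover have "X \<union> \<Union> (set Xs) \<subseteq> X \<union> \<Union> (set (Xs @ [Y]))" by auto
    ultimately have "X \<union> \<Union> (set (Xs @ [Y])) = X \<union> \<Union> (set Xs)"
      using m unfolding maximal_partial_k_sequence_def by blast
    then show False using Y by auto
  qed
  moreover have "strong T (X \<union> \<Union> (set Xs))" by (rule strong_superset[OF sX]) simp
  ultimately show ?thesis
    using XE partial_k_sequence_subset_ground[OF ps] partial_k_sequence_k_separating[OF kX ps]
    unfolding fully_closed_def by blast
qed

theorem lemma3p6:
  fixes E :: "'a set" and lam :: "'a set \<Rightarrow> int" and k :: int
    and T :: "'a set set" and X :: "'a set" and Xs :: "'a set list"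
  assumes "connectivity_system E lam"
    and "tangle E lam k T"
    and "X \<subseteq> E"
    and "strong T X"
    and "k_separating lam k X"
    and "partial_k_sequence E lam k T X Xs"
  shows "fcl E lam k T X = X \<union> \<Union> (set Xs) \<longleftrightarrow> maximal_partial_k_sequence E lam k T X Xs"
proof
  assume "fcl E lam k T X = X \<union> \<Union> (set Xs)"
  then show "maximal_partial_k_sequence E lam k T X Xs"
    using partial_k_sequence_subset_fcl[OF assms(1-4)] assms(6)
    unfolding maximal_partial_k_sequence_def by blast
next
  assume "maximal_partial_k_sequence E lam k T X Xs"
  then have "fully_closed E lam k T (X \<union> \<Union> (set Xs))"
    using maximal_partial_k_sequence_fully_closed assms(3-5) by blast
  then have "fcl E lam k T X \<subseteq> X \<union> \<Union> (set Xs)" unfolding fcl_def by blast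
  then show "fcl E lam k T X = X \<union> \<Union> (set Xs)"
    using partial_k_sequence_subset_fcl[OF assms(1-4,6)] by blast
qed

end
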